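(* Fix integers $k\ge 3$ and $r\ge 1$. For $n\ge 0$ let $c_n$ be the number of words on $[n]^r$ that avoid both $123$ and $1k(k-1)\cdots 2$. Then the sequence $(c_n)_{n\ge0}$ satisfies a linear recurrence with constant coefficients; equivalently, $\sum_{n\ge 0} c_n x^n$ is a rational function of $x$.
   Context: A word on $[n]^r$ is a word in which each letter $1,2,\dots,n$ appears exactly $r$ times and no other letter appears (for $r=1$ these are the permutations of $[n]$). A word $w_1\cdots w_m$ contains a pattern $p_1\cdots p_k$ if there are indices $i_1<\dots<i_k$ such that for all $r,s$: $w_{i_r}<w_{i_s}\iff p_r<p_s$ and $w_{i_r}>w_{i_s}\iff p_r>p_s$; otherwise it avoids it. The pattern $1k(k-1)\cdots 2$ is $1$ followed by $k,k-1,\dots,2$. *)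

theory Defs
  imports Complex_Main
begin

definition is_word_on :: "nat \<Rightarrow> nat \<Rightarrow> nat list \<Rightarrow> bool" where
  "is_word_on n r w \<longleftrightarrow> set w \<subseteq> {1..n} \<and> (\<forall>a\<in>{1..n}. count_list w a = r)"

definition contains_pattern :: "nat list \<Rightarrow> nat list \<Rightarrow> bool" where
  "contains_pattern w p \<longleftrightarrow>
     (\<exists>idx :: nat \<Rightarrow> nat.
        (\<forall>i j. i < j \<and> j < length p \<longrightarrow> idx i < idx j) \<and>
        (\<forall>i < length p. idx i < length w) \<and>
        (\<forall>i < length p. \<forall>j < length p.
            (w ! idx i < w ! idx j \<longleftrightarrow> p ! i < p ! j) \<and>
            (w ! idx i > w ! idx j \<longleftrightarrow> p ! i > p ! j)))"

definition avoids_pattern :: "nat list \<Rightarrow> nat list \<Rightarrow> bool" where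
  "avoids_pattern w p \<longleftrightarrow> \<not> contains_pattern w p"

definition pat_1_k_down :: "nat \<Rightarrow> nat list" where
  "pat_1_k_down k = 1 # rev [2..<k+1]"

definition count_avoiders :: "nat \<Rightarrow> nat \<Rightarrow> nat \<Rightarrow> nat" where
  "count_avoiders k r n = card {w. is_word_on n r w \<and> avoids_pattern w [1,2,3]
                                   \<and> avoids_pattern w (pat_1_k_down k)}"

end

theory Submission
  imports Defs "HOL-Library.Sublist" "Jordan_Normal_Form.Determinant"
begin

text \<open>
  Call a word min-insertable if it avoids 12 and (k-1)(k-2)...1; these are exactly the words in
  front of which a letter smaller than all of their letters can be placed without creating 123 or
  1k(k-1)...2. Deleting the ones of a word on [n+1]^r that avoids both patterns, and lowering the
  remaining letters by one, leaves a word w on [n]^r avoiding both; conversely, inserting r ones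
  into w gives an avoider iff everything after the first new one lies in the longest
  min-insertable suffix of w. That suffix is weakly decreasing with at most k-2 distinct letters,
  so its standardization, the state of w, takes finitely many values, and the state of the new
  word depends only on the state of w and on how the ones are placed. Counting avoiders by state
  is therefore a transfer-matrix recursion x(n+1) = M x(n) in a finite-dimensional space, and the
  total count satisfies a linear recurrence because x(0), ..., x(m) are linearly dependent in Q^m.
\<close>

section \<open>Patterns as order-isomorphic subsequences\<close>

lemma subseq_imp_indices:
  "subseq v w \<Longrightarrow> \<exists>idx. (\<forall>i j. i < j \<and> j < length v \<longrightarrow> idx i < idx j)
     \<and> (\<forall>i<length v. idx i < length w \<and> w ! idx i = v ! i)"
proof (induction rule: list_emb.induct)
  case (list_emb_Nil ys)
  then show ?case by auto
next
  case (list_emb_Cons xs ys y)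
  then obtain idx where "\<forall>i j. i < j \<and> j < length xs \<longrightarrow> idx i < idx j"
    and "\<forall>i<length xs. idx i < length ys \<and> ys ! idx i = xs ! i" by blast
  then show ?case by (intro exI[of _ "Suc \<circ> idx"]) auto
next
  case (list_emb_Cons2 x y xs ys)
  then obtain idx where "\<forall>i j. i < j \<and> j < length xs \<longrightarrow> idx i < idx j"
    and "\<forall>i<length xs. idx i < length ys \<and> ys ! idx i = xs ! i" by blast
  with list_emb_Cons2.hyps show ?case
    by (intro exI[of _ "case_nat 0 (Suc \<circ> idx)"]) (auto simp: less_Suc_eq_0_disj)
qed

lemma indices_imp_subseq:
  assumes "\<And>i j. i < j \<Longrightarrow> j < length v \<Longrightarrow> idx i < idx j"
    and "\<And>i. i < length v \<Longrightarrow> idx i < length w \<and> w ! idx i = v ! i"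
  shows "subseq v w"
  using assms
proof (induction v arbitrary: idx w)
  case Nil
  then show ?case by simp
next
  case (Cons x xs)
  define m where "m = idx 0"
  have m: "m < length w" "w ! m = x" using Cons.prems(2)[of 0] by (auto simp: m_def)
  have later: "m < idx (Suc i)" if "i < length xs" for i
    using Cons.prems(1)[of 0 "Suc i"] that by (simp add: m_def)
  have "subseq xs (drop (Suc m) w)"
  proof (rule Cons.IH[of "\<lambda>i. idx (Suc i) - Suc m"])
    show "idx (Suc i) - Suc m < idx (Suc j) - Suc m" if "i < j" "j < length xs" for i j
      using Cons.prems(1)[of "Suc i" "Suc j"] later[of i] that by simp
    show "idx (Suc i) - Suc m < length (drop (Suc m) w) \<and>
          drop (Suc m) w ! (idx (Suc i) - Suc m) = xs ! i" if "i < length xs" for i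
      using Cons.prems(2)[of "Suc i"] later[of i] that by auto
  qed
  then have "subseq (x # xs) (take m w @ w ! m # drop (Suc m) w)"
    using m(2) by (simp add: subseq_drop_many)
  then show ?case using id_take_nth_drop[OF m(1)] by simp
qed

text \<open>The clause for > in contains_pattern is the clause for < with i and j exchanged.\<close>

definition order_isomorphic :: "nat list \<Rightarrow> nat list \<Rightarrow> bool" where
  "order_isomorphic v p \<longleftrightarrow> length v = length p \<and>
     (\<forall>i<length p. \<forall>j<length p. v ! i < v ! j \<longleftrightarrow> p ! i < p ! j)"

lemma contains_pattern_iff_subseq:
  "contains_pattern w p \<longleftrightarrow> (\<exists>v. subseq v w \<and> order_isomorphic v p)"
proof
  assume "contains_pattern w p"
  then obtain idx where mono: "\<forall>i j. i < j \<and> j < length p \<longrightarrow> idx i < idx j"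
    and bound: "\<forall>i<length p. idx i < length w"
    and iso: "\<forall>i<length p. \<forall>j<length p. w ! idx i < w ! idx j \<longleftrightarrow> p ! i < p ! j"
    unfolding contains_pattern_def by blast
  define v where "v = map (\<lambda>i. w ! idx i) [0..<length p]"
  have "subseq v w" by (rule indices_imp_subseq[of v idx]) (use mono bound in \<open>auto simp: v_def\<close>)
  moreover have "order_isomorphic v p" using iso by (simp add: order_isomorphic_def v_def)
  ultimately show "\<exists>v. subseq v w \<and> order_isomorphic v p" by blast
next
  assume "\<exists>v. subseq v w \<and> order_isomorphic v p"
  then obtain v where "subseq v w" and iso: "order_isomorphic v p" by blast
  then obtain idx where "\<forall>i j. i < j \<and> j < length v \<longrightarrow> idx i < idx j"
    and "\<forall>i<length v. idx i < length w \<and> w ! idx i = v ! i"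
    using subseq_imp_indices by blast
  with iso show "contains_pattern w p"
    unfolding contains_pattern_def order_isomorphic_def by (intro exI[of _ idx]) auto
qed

lemma contains_pattern_subseq:
  "contains_pattern v p \<Longrightarrow> subseq v w \<Longrightarrow> contains_pattern w p"
  unfolding contains_pattern_iff_subseq using subseq_order.order_trans by blast

lemma contains_pattern_map:
  assumes "strict_mono_on (set w) h"
  shows "contains_pattern (map h w) p \<longleftrightarrow> contains_pattern w p"
proof -
  have "map h w ! i < map h w ! j \<longleftrightarrow> w ! i < w ! j" if "i < length w" "j < length w" for i j
    using strict_mono_on_less[OF assms] that by simp
  then show ?thesis unfolding contains_pattern_def by (simp cong: conj_cong)
qed

definition has_chain :: "(nat \<Rightarrow> nat \<Rightarrow> bool) \<Rightarrow> nat \<Rightarrow> nat list \<Rightarrow> bool" where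
  "has_chain R m w \<longleftrightarrow> (\<exists>v. subseq v w \<and> length v = m \<and> sorted_wrt R v)"

definition has_decr_above :: "nat \<Rightarrow> nat list \<Rightarrow> bool" where
  "has_decr_above m w \<longleftrightarrow>
     (\<exists>a v. subseq (a # v) w \<and> length v = m \<and> sorted_wrt (>) v \<and> (\<forall>d\<in>set v. a < d))"

lemma sorted_wrt_less_nth_iff:
  fixes xs :: "'a::linorder list"
  assumes "sorted_wrt (<) xs" "i < length xs" "j < length xs"
  shows "xs ! i < xs ! j \<longleftrightarrow> i < j"
  using sorted_wrt_nth_less[OF assms(1), of i j] sorted_wrt_nth_less[OF assms(1), of j i] assms(2,3)
  by (cases i j rule: linorder_cases) auto

lemma sorted_wrt_greater_nth_iff:
  fixes xs :: "'a::linorder list"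
  assumes "sorted_wrt (>) xs" "i < length xs" "j < length xs"
  shows "xs ! i < xs ! j \<longleftrightarrow> j < i"
  using sorted_wrt_nth_less[OF assms(1), of i j] sorted_wrt_nth_less[OF assms(1), of j i] assms(2,3)
  by (cases i j rule: linorder_cases) auto

lemma order_isomorphic_increasing:
  assumes "sorted_wrt (<) p"
  shows "order_isomorphic v p \<longleftrightarrow> length v = length p \<and> sorted_wrt (<) v"
proof -
  have "order_isomorphic v p \<longleftrightarrow>
      length v = length p \<and> (\<forall>i<length v. \<forall>j<length v. v ! i < v ! j \<longleftrightarrow> i < j)"
    unfolding order_isomorphic_def using sorted_wrt_less_nth_iff[OF assms] by auto
  also have "\<dots> \<longleftrightarrow> length v = length p \<and> sorted_wrt (<) v"
    using sorted_wrt_less_nth_iff[of v] by (auto simp: sorted_wrt_iff_nth_less)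
  finally show ?thesis .
qed

lemma order_isomorphic_decreasing:
  assumes "sorted_wrt (>) p"
  shows "order_isomorphic v p \<longleftrightarrow> length v = length p \<and> sorted_wrt (>) v"
proof -
  have "order_isomorphic v p \<longleftrightarrow>
      length v = length p \<and> (\<forall>i<length v. \<forall>j<length v. v ! i < v ! j \<longleftrightarrow> j < i)"
    unfolding order_isomorphic_def using sorted_wrt_greater_nth_iff[OF assms] by auto
  also have "\<dots> \<longleftrightarrow> length v = length p \<and> sorted_wrt (>) v"
    using sorted_wrt_greater_nth_iff[of v] by (auto simp: sorted_wrt_iff_nth_less)
  finally show ?thesis .
qed

lemma order_isomorphic_Cons:
  "order_isomorphic (a # v) (b # p) \<longleftrightarrow> order_isomorphic v p \<and>
     (\<forall>i<length p. (a < v ! i \<longleftrightarrow> b < p ! i) \<and> (v ! i < a \<longleftrightarrow> p ! i < b))"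
  unfolding order_isomorphic_def by (auto simp: All_less_Suc2)

lemma contains_increasing_pattern:
  "sorted_wrt (<) p \<Longrightarrow> contains_pattern w p \<longleftrightarrow> has_chain (<) (length p) w"
  unfolding contains_pattern_iff_subseq has_chain_def by (simp add: order_isomorphic_increasing)

lemma contains_decreasing_pattern:
  "sorted_wrt (>) p \<Longrightarrow> contains_pattern w p \<longleftrightarrow> has_chain (>) (length p) w"
  unfolding contains_pattern_iff_subseq has_chain_def by (simp add: order_isomorphic_decreasing)

lemma contains_pat_1_k_down:
  "contains_pattern w (pat_1_k_down k) \<longleftrightarrow> has_decr_above (k - 1) w"
proof -
  define q where "q = rev [2..<k+1]"
  have q: "sorted_wrt (>) q" "length q = k - 1" "\<forall>x\<in>set q. 1 < x"
    by (simp_all add: q_def sorted_wrt_rev del: upt_Suc)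
  have "order_isomorphic (a # v) (1 # q) \<longleftrightarrow>
          length v = k - 1 \<and> sorted_wrt (>) v \<and> (\<forall>d\<in>set v. a < d)" for a v
  proof -
    have "\<forall>i<length q. 1 < q ! i" using q(3) by simp
    then have "order_isomorphic (a # v) (1 # q) \<longleftrightarrow>
        order_isomorphic v q \<and> (\<forall>i<length q. a < v ! i)"
      by (auto simp: order_isomorphic_Cons)
    also have "\<dots> \<longleftrightarrow> length v = k - 1 \<and> sorted_wrt (>) v \<and> (\<forall>i<length v. a < v ! i)"
      using q(1,2) by (auto simp: order_isomorphic_decreasing)
    finally show ?thesis by (simp add: all_set_conv_all_nth)
  qed
  moreover have "(\<exists>v. subseq v w \<and> order_isomorphic v (1 # q)) \<longleftrightarrow>
      (\<exists>a v. subseq (a # v) w \<and> order_isomorphic (a # v) (1 # q))"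
  proof
    assume "\<exists>v. subseq v w \<and> order_isomorphic v (1 # q)"
    then obtain v where v: "subseq v w" "order_isomorphic v (1 # q)" by blast
    then obtain a v' where "v = a # v'" by (cases v) (auto simp: order_isomorphic_def)
    with v show "\<exists>a v. subseq (a # v) w \<and> order_isomorphic (a # v) (1 # q)" by blast
  qed blast
  ultimately show ?thesis
    unfolding contains_pattern_iff_subseq has_decr_above_def pat_1_k_down_def q_def[symmetric]
    by simp
qed

section \<open>Removing the smallest letter\<close>

lemma subseq_set_subset: "subseq xs ys \<Longrightarrow> set xs \<subseteq> set ys"
  by (metis subseq_conv_nths set_nths_subset)

lemma has_chain_subseq: "has_chain R m v \<Longrightarrow> subseq v w \<Longrightarrow> has_chain R m w"
  unfolding has_chain_def using subseq_order.order_trans by blast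

lemma has_decr_above_subseq: "has_decr_above m v \<Longrightarrow> subseq v w \<Longrightarrow> has_decr_above m w"
  unfolding has_decr_above_def using subseq_order.order_trans by blast

lemma subseq_after_first: "x \<notin> set u \<Longrightarrow> subseq (x # xs) (u @ x # v) \<Longrightarrow> subseq xs v"
  by (induction u) auto

lemma subseq_split_at_min:
  fixes x :: "'a::linorder"
  assumes x: "x \<notin> set u" "\<forall>y\<in>set (u @ x # v). x \<le> y"
    and sub: "subseq (a # ds) (u @ x # v)" and above: "\<forall>d\<in>set ds. a < d"
  shows "a = x \<and> subseq ds (filter (\<lambda>y. y \<noteq> x) v) \<or>
    subseq (a # ds) (filter (\<lambda>y. y \<noteq> x) (u @ v))"
proof (cases "a = x")
  case True
  then have "subseq (filter (\<lambda>y. y \<noteq> x) ds) (filter (\<lambda>y. y \<noteq> x) v)"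
    using subseq_after_first[OF x(1)] sub by (simp add: subseq_filter)
  moreover have "filter (\<lambda>y. y \<noteq> x) ds = ds" using True above by (auto intro!: filter_True)
  ultimately show ?thesis using True by simp
next
  case False
  have "a \<in> set (u @ x # v)" using subseq_set_subset[OF sub] by simp
  then have "x < a" using x(2) False by force
  then have "filter (\<lambda>y. y \<noteq> x) (a # ds) = a # ds" using above by (auto intro!: filter_True)
  moreover have "subseq (filter (\<lambda>y. y \<noteq> x) (a # ds)) (filter (\<lambda>y. y \<noteq> x) (u @ x # v))"
    using sub by (rule subseq_filter)
  ultimately show ?thesis by simp
qed

lemma subseq_Cons_min:
  fixes x :: "'a::linorder"
  assumes "\<forall>y\<in>set (u @ x # v). x \<le> y" and "subseq ds (filter (\<lambda>y. y \<noteq> x) v)"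
  shows "subseq (x # ds) (u @ x # v) \<and> (\<forall>d\<in>set ds. x < d)"
proof
  have "subseq ds v" using assms(2) subseq_filter_left subseq_order.order_trans by blast
  then show "subseq (x # ds) (u @ x # v)" by (simp add: subseq_drop_many)
  show "\<forall>d\<in>set ds. x < d"
  proof
    fix d assume "d \<in> set ds"
    then have "d \<in> set v" "d \<noteq> x" using subseq_set_subset[OF assms(2)] by auto
    moreover have "x \<le> d" using assms(1) \<open>d \<in> set v\<close> by simp
    ultimately show "x < d" by simp
  qed
qed

lemma subseq_filter_remove:
  "subseq (filter (\<lambda>y. y \<noteq> x) (u @ v)) (u @ x # v)"
proof -
  have "filter (\<lambda>y. y \<noteq> x) (u @ v) = filter (\<lambda>y. y \<noteq> x) (u @ x # v)" by simp
  then show ?thesis by (metis subseq_filter_left)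
qed

lemma has_chain_less_split_at_min:
  assumes "x \<notin> set u" "\<forall>y\<in>set (u @ x # v). x \<le> y"
  shows "has_chain (<) (Suc m) (u @ x # v) \<longleftrightarrow>
    has_chain (<) (Suc m) (filter (\<lambda>y. y \<noteq> x) (u @ v)) \<or>
    has_chain (<) m (filter (\<lambda>y. y \<noteq> x) v)" (is "?lhs \<longleftrightarrow> ?before \<or> ?after")
proof
  assume ?lhs
  then obtain c where c: "subseq c (u @ x # v)" "length c = Suc m" "sorted_wrt (<) c"
    unfolding has_chain_def by blast
  then obtain a ds where "c = a # ds" by (cases c) auto
  with c have sub: "subseq (a # ds) (u @ x # v)" and len: "length ds = m"
    and sorted: "sorted_wrt (<) (a # ds)" by simp_all
  then have "\<forall>d\<in>set ds. a < d" by simp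
  from subseq_split_at_min[OF assms sub this] show "?before \<or> ?after"
  proof
    assume "a = x \<and> subseq ds (filter (\<lambda>y. y \<noteq> x) v)"
    then have ?after unfolding has_chain_def using len sorted by (intro exI[of _ ds]) simp
    then show ?thesis ..
  next
    assume "subseq (a # ds) (filter (\<lambda>y. y \<noteq> x) (u @ v))"
    then have ?before unfolding has_chain_def using len sorted by (intro exI[of _ "a # ds"]) simp
    then show ?thesis ..
  qed
next
  assume "?before \<or> ?after"
  then show ?lhs
  proof
    assume ?before
    then show ?lhs by (rule has_chain_subseq[OF _ subseq_filter_remove])
  next
    assume ?after
    then obtain ds where "subseq ds (filter (\<lambda>y. y \<noteq> x) v)" "length ds = m" "sorted_wrt (<) ds"
      unfolding has_chain_def by blast
    with subseq_Cons_min[OF assms(2)] show ?lhs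
      unfolding has_chain_def by (intro exI[of _ "x # ds"]) simp
  qed
qed

lemma has_decr_above_split_at_min:
  assumes "x \<notin> set u" "\<forall>y\<in>set (u @ x # v). x \<le> y"
  shows "has_decr_above m (u @ x # v) \<longleftrightarrow>
    has_decr_above m (filter (\<lambda>y. y \<noteq> x) (u @ v)) \<or>
    has_chain (>) m (filter (\<lambda>y. y \<noteq> x) v)" (is "?lhs \<longleftrightarrow> ?before \<or> ?after")
proof
  assume ?lhs
  then obtain a ds where sub: "subseq (a # ds) (u @ x # v)" and len: "length ds = m"
    and sorted: "sorted_wrt (>) ds" and above: "\<forall>d\<in>set ds. a < d"
    unfolding has_decr_above_def by blast
  from subseq_split_at_min[OF assms sub above] show "?before \<or> ?after"
  proof
    assume "a = x \<and> subseq ds (filter (\<lambda>y. y \<noteq> x) v)"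
    then have ?after unfolding has_chain_def using len sorted by (intro exI[of _ ds]) simp
    then show ?thesis ..
  next
    assume "subseq (a # ds) (filter (\<lambda>y. y \<noteq> x) (u @ v))"
    then have ?before unfolding has_decr_above_def using len sorted above
      by (intro exI[of _ a] exI[of _ ds]) simp
    then show ?thesis ..
  qed
next
  assume "?before \<or> ?after"
  then show ?lhs
  proof
    assume ?before
    then show ?lhs by (rule has_decr_above_subseq[OF _ subseq_filter_remove])
  next
    assume ?after
    then obtain ds where "subseq ds (filter (\<lambda>y. y \<noteq> x) v)" "length ds = m" "sorted_wrt (>) ds"
      unfolding has_chain_def by blast
    with subseq_Cons_min[OF assms(2)] show ?lhs
      unfolding has_decr_above_def by (intro exI[of _ x] exI[of _ ds]) simp
  qed
qed

definition avoids_both :: "nat \<Rightarrow> nat list \<Rightarrow> bool" where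
  "avoids_both k w \<longleftrightarrow> avoids_pattern w [1, 2, 3] \<and> avoids_pattern w (pat_1_k_down k)"

definition min_insertable :: "nat \<Rightarrow> nat list \<Rightarrow> bool" where
  "min_insertable k w \<longleftrightarrow> avoids_pattern w [1, 2] \<and> avoids_pattern w (rev [1..<k])"

lemma avoids_both_iff_chains:
  "avoids_both k w \<longleftrightarrow> \<not> has_chain (<) 3 w \<and> \<not> has_decr_above (k - 1) w"
  using contains_increasing_pattern[of "[1, 2, 3]" w]
  by (simp add: avoids_both_def avoids_pattern_def contains_pat_1_k_down numeral_eq_Suc)

lemma min_insertable_iff_chains:
  "min_insertable k w \<longleftrightarrow> \<not> has_chain (<) 2 w \<and> \<not> has_chain (>) (k - 1) w"
  using contains_increasing_pattern[of "[1, 2]" w] contains_decreasing_pattern[of "rev [1..<k]" w]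
  by (simp add: min_insertable_def avoids_pattern_def sorted_wrt_rev numeral_eq_Suc del: upt_Suc)

lemma avoids_both_split_at_min:
  assumes "x \<notin> set u" "\<forall>y\<in>set (u @ x # v). x \<le> y"
  shows "avoids_both k (u @ x # v) \<longleftrightarrow>
    avoids_both k (filter (\<lambda>y. y \<noteq> x) (u @ v)) \<and> min_insertable k (filter (\<lambda>y. y \<noteq> x) v)"
  using has_chain_less_split_at_min[OF assms, of 2]
    has_decr_above_split_at_min[OF assms, of "k - 1"]
  by (auto simp: avoids_both_iff_chains min_insertable_iff_chains numeral_eq_Suc)

lemma avoids_both_map:
  "strict_mono_on (set w) h \<Longrightarrow> avoids_both k (map h w) \<longleftrightarrow> avoids_both k w"
  by (simp add: avoids_both_def avoids_pattern_def contains_pattern_map)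

lemma min_insertable_map:
  "strict_mono_on (set w) h \<Longrightarrow> min_insertable k (map h w) \<longleftrightarrow> min_insertable k w"
  by (simp add: min_insertable_def avoids_pattern_def contains_pattern_map)

lemma min_insertable_subseq:
  "min_insertable k w \<Longrightarrow> subseq v w \<Longrightarrow> min_insertable k v"
  unfolding min_insertable_def avoids_pattern_def using contains_pattern_subseq by blast

lemma min_insertable_Nil: "2 \<le> k \<Longrightarrow> min_insertable k []"
  by (simp add: min_insertable_def avoids_pattern_def contains_pattern_iff_subseq
      order_isomorphic_def)

section \<open>Insertable suffixes and standardization\<close>

lemma nonincreasing_if_no_ascent:
  assumes "\<not> has_chain (<) 2 w"
  shows "sorted_wrt (\<ge>) w"
  unfolding sorted_wrt_iff_nth_less
proof (intro allI impI)
  fix i j assume ij: "i < j" "j < length w"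
  have "subseq [w ! i, w ! j] w"
    by (rule indices_imp_subseq[of _ "\<lambda>t. if t = 0 then i else j"])
      (use ij in \<open>auto simp: less_Suc_eq\<close>)
  with assms show "w ! j \<le> w ! i" unfolding has_chain_def by force
qed

lemma subseq_remdups_adj: "subseq (remdups_adj xs) xs"
  by (induction xs rule: remdups_adj.induct) auto

lemma sorted_wrt_remdups_adj_decreasing:
  fixes xs :: "'a::linorder list"
  shows "sorted_wrt (\<ge>) xs \<Longrightarrow> sorted_wrt (>) (remdups_adj xs)"
  by (induction xs rule: remdups_adj.induct) (auto simp: order_le_less)

lemma has_chain_decreasing_card:
  assumes "sorted_wrt (\<ge>) w"
  shows "has_chain (>) (card (set w)) w"
proof -
  have sorted: "sorted_wrt (>) (remdups_adj w)"
    using assms by (rule sorted_wrt_remdups_adj_decreasing)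
  have "distinct xs" if "sorted_wrt (>) xs" for xs :: "nat list" using that by (induction xs) auto
  with sorted have "distinct (remdups_adj w)" by blast
  then have "length (remdups_adj w) = card (set w)" by (metis distinct_card remdups_adj_set)
  with sorted show ?thesis unfolding has_chain_def using subseq_remdups_adj by blast
qed

lemma has_chain_shorter:
  assumes "has_chain R m w" "n \<le> m"
  shows "has_chain R n w"
proof -
  obtain v where v: "subseq v w" "length v = m" "sorted_wrt R v"
    using assms(1) unfolding has_chain_def by blast
  have "subseq (take n v) w" using v(1) take_is_prefix prefix_imp_subseq subseq_order.order_trans
    by blast
  with v assms(2) show ?thesis unfolding has_chain_def
    by (intro exI[of _ "take n v"]) (simp add: sorted_wrt_take)
qed

lemma card_set_le_if_min_insertable:
  assumes "min_insertable k w"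
  shows "card (set w) \<le> k - 2"
proof (rule ccontr)
  assume "\<not> card (set w) \<le> k - 2"
  moreover have "has_chain (>) (card (set w)) w"
    using assms nonincreasing_if_no_ascent has_chain_decreasing_card
    unfolding min_insertable_iff_chains by blast
  ultimately have "has_chain (>) (k - 1) w" by (simp add: has_chain_shorter)
  with assms show False unfolding min_insertable_iff_chains by blast
qed

definition insertable_start :: "nat \<Rightarrow> nat list \<Rightarrow> nat" where
  "insertable_start k w = (LEAST i. min_insertable k (drop i w))"

definition longest_insertable_suffix :: "nat \<Rightarrow> nat list \<Rightarrow> nat list" where
  "longest_insertable_suffix k w = drop (insertable_start k w) w"

lemma min_insertable_drop_iff:
  assumes "2 \<le> k"
  shows "min_insertable k (drop i w) \<longleftrightarrow> insertable_start k w \<le> i"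
proof
  assume "min_insertable k (drop i w)"
  then show "insertable_start k w \<le> i" unfolding insertable_start_def by (rule Least_le)
next
  assume le: "insertable_start k w \<le> i"
  have "min_insertable k (drop (insertable_start k w) w)"
    unfolding insertable_start_def
    by (rule LeastI[of _ "length w"]) (simp add: min_insertable_Nil assms)
  moreover have "suffix (drop i w) (drop (insertable_start k w) w)"
    using le by (metis drop_drop le_add_diff_inverse2 suffix_drop)
  ultimately show "min_insertable k (drop i w)"
    by (blast intro: min_insertable_subseq suffix_imp_subseq)
qed

lemma min_insertable_longest_insertable_suffix:
  "2 \<le> k \<Longrightarrow> min_insertable k (longest_insertable_suffix k w)"
  unfolding longest_insertable_suffix_def by (simp add: min_insertable_drop_iff)

lemma insertable_start_le_length: "2 \<le> k \<Longrightarrow> insertable_start k w \<le> length w"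
  using min_insertable_drop_iff[of k "length w" w] by (simp add: min_insertable_Nil)

lemma insertable_start_map:
  assumes "strict_mono_on (set w) h"
  shows "insertable_start k (map h w) = insertable_start k w"
proof -
  have "strict_mono_on (set (drop i w)) h" for i
    using assms set_drop_subset by (rule monotone_on_subset)
  then show ?thesis unfolding insertable_start_def by (simp add: drop_map min_insertable_map)
qed

lemma longest_insertable_suffix_map:
  "strict_mono_on (set w) h \<Longrightarrow>
    longest_insertable_suffix k (map h w) = map h (longest_insertable_suffix k w)"
  unfolding longest_insertable_suffix_def by (simp add: insertable_start_map drop_map)

lemma longest_insertable_suffix_append:
  assumes k: "2 \<le> k" and not_insertable: "\<forall>i<length P. \<not> min_insertable k (drop i (P @ X))"
  shows "longest_insertable_suffix k (P @ X) = longest_insertable_suffix k X"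
proof -
  have "insertable_start k (P @ X) \<le> i \<longleftrightarrow> length P + insertable_start k X \<le> i" for i
  proof (cases "i < length P")
    case True
    then show ?thesis using not_insertable min_insertable_drop_iff[OF k, of i "P @ X"] by auto
  next
    case False
    then have "drop i (P @ X) = drop (i - length P) X" by simp
    then show ?thesis using min_insertable_drop_iff[OF k] False
      by (metis le_diff_conv2 add.commute not_less)
  qed
  then have "insertable_start k (P @ X) = length P + insertable_start k X"
    by (metis order_refl le_antisym)
  then show ?thesis unfolding longest_insertable_suffix_def by simp
qed

definition rank :: "'a::linorder list \<Rightarrow> 'a \<Rightarrow> nat" where
  "rank xs x = card {y \<in> set xs. y \<le> x}"

definition standardize :: "'a::linorder list \<Rightarrow> nat list" where
  "standardize xs = map (rank xs) xs"

lemma length_standardize [simp]: "length (standardize xs) = length xs"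
  by (simp add: standardize_def)

lemma strict_mono_on_rank: "strict_mono_on (set xs) (rank xs)"
proof (rule strict_mono_onI)
  fix x y assume xy: "x \<in> set xs" "y \<in> set xs" "x < y"
  then have "y \<in> {z \<in> set xs. z \<le> y}" "y \<notin> {z \<in> set xs. z \<le> x}" by auto
  with xy have "{z \<in> set xs. z \<le> x} \<subset> {z \<in> set xs. z \<le> y}" by fastforce
  then show "rank xs x < rank xs y" unfolding rank_def by (simp add: psubset_card_mono)
qed

lemma set_standardize: "set (standardize xs) \<subseteq> {1..card (set xs)}"
proof
  fix n assume "n \<in> set (standardize xs)"
  then obtain x where x: "x \<in> set xs" "n = rank xs x" unfolding standardize_def by auto
  then have "{y \<in> set xs. y \<le> x} \<noteq> {}" by auto
  then have "1 \<le> n" unfolding x(2) rank_def by (simp add: Suc_leI card_gt_0_iff)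
  moreover have "n \<le> card (set xs)" unfolding x(2) rank_def by (rule card_mono) auto
  ultimately show "n \<in> {1..card (set xs)}" by simp
qed

lemma standardize_map:
  assumes h: "strict_mono_on (set xs) h"
  shows "standardize (map h xs) = standardize xs"
proof -
  have "rank (map h xs) (h x) = rank xs x" if x: "x \<in> set xs" for x
  proof -
    have "{y \<in> set (map h xs). y \<le> h x} = h ` {y \<in> set xs. y \<le> x}"
      using strict_mono_on_less_eq[OF h _ x] by auto
    moreover have "inj_on h {y \<in> set xs. y \<le> x}"
      using strict_mono_on_imp_inj_on[OF h] by (rule inj_on_subset) auto
    ultimately show ?thesis unfolding rank_def by (simp add: card_image)
  qed
  then show ?thesis unfolding standardize_def by simp
qed

lemma standardize_inverse:
  obtains g where "strict_mono_on (set (standardize xs)) g" "map g (standardize xs) = xs"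
proof
  let ?g = "inv_into (set xs) (rank xs)"
  have inj: "inj_on (rank xs) (set xs)" by (rule strict_mono_on_imp_inj_on[OF strict_mono_on_rank])
  then show "map ?g (standardize xs) = xs" unfolding standardize_def by (simp add: map_idI)
  show "strict_mono_on (set (standardize xs)) ?g"
  proof (rule strict_mono_onI)
    fix a b assume "a \<in> set (standardize xs)" "b \<in> set (standardize xs)" "a < b"
    then obtain x y where "x \<in> set xs" "y \<in> set xs" "a = rank xs x" "b = rank xs y"
      "rank xs x < rank xs y"
      unfolding standardize_def by auto
    moreover from this have "x < y" using strict_mono_on_less[OF strict_mono_on_rank] by blast
    ultimately show "?g a < ?g b" using inj by simp
  qed
qed

section \<open>Inserting a new smallest letter\<close>

fun interleave_ones :: "bool list \<Rightarrow> nat list \<Rightarrow> nat list" where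
  "interleave_ones [] ys = []"
| "interleave_ones (True # bs) ys = 1 # interleave_ones bs ys"
| "interleave_ones (False # bs) [] = interleave_ones bs []"
| "interleave_ones (False # bs) (y # ys) = y # interleave_ones bs ys"

lemma interleave_ones_replicate_False:
  "p \<le> length ys \<Longrightarrow>
    interleave_ones (replicate p False @ bs) ys = take p ys @ interleave_ones bs (drop p ys)"
proof (induction p arbitrary: ys)
  case (Suc p)
  then show ?case by (cases ys) auto
qed simp

lemma filter_interleave_ones:
  "1 \<notin> set ys \<Longrightarrow> count_list bs False = length ys \<Longrightarrow>
    filter (\<lambda>x. x \<noteq> 1) (interleave_ones bs ys) = ys"
  by (induction bs ys rule: interleave_ones.induct) auto

lemma map_eq_1_interleave_ones:
  "1 \<notin> set ys \<Longrightarrow> count_list bs False = length ys \<Longrightarrow>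
    map (\<lambda>x. x = 1) (interleave_ones bs ys) = bs"
  by (induction bs ys rule: interleave_ones.induct) auto

lemma interleave_ones_mask_filter:
  "interleave_ones (map (\<lambda>x. x = 1) w) (filter (\<lambda>x. x \<noteq> 1) w) = w"
  by (induction w) auto

lemma count_list_interleave_ones:
  "count_list bs False = length ys \<Longrightarrow>
    count_list (interleave_ones bs ys) x =
      (if x = 1 then count_list bs True else 0) + count_list ys x"
  by (induction bs ys rule: interleave_ones.induct) auto

lemma set_interleave_ones: "set (interleave_ones bs ys) \<subseteq> insert 1 (set ys)"
  by (induction bs ys rule: interleave_ones.induct) auto

lemma interleave_ones_map:
  "h 1 = 1 \<Longrightarrow> \<forall>y\<in>set ys. h (Suc y) = Suc (g y) \<Longrightarrow>
    interleave_ones bs (map Suc (map g ys)) = map h (interleave_ones bs (map Suc ys))"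
  by (induction bs "map Suc ys" arbitrary: ys rule: interleave_ones.induct) auto

lemma count_list_filter: "count_list (filter P xs) x = (if P x then count_list xs x else 0)"
  by (induction xs) auto

lemma count_list_replicate [simp]: "count_list (replicate n x) y = (if x = y then n else 0)"
  by (induction n) auto

text \<open>
  insert_min w bs raises all letters of w by one and inserts new ones; bs describes the new word
  from its first new one onwards, True standing for a one and False for the next letter of w.
\<close>

definition insert_min :: "nat list \<Rightarrow> bool list \<Rightarrow> nat list" where
  "insert_min w bs =
     interleave_ones (replicate (length w - count_list bs False) False @ bs) (map Suc w)"

lemma insert_min_append:
  assumes "count_list bs False \<le> length s"
  shows "insert_min (u @ s) bs = map Suc u @ insert_min s bs"
proof -
  have "replicate (length (u @ s) - count_list bs False) False =
      replicate (length u) False @ replicate (length s - count_list bs False) False"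
    using assms by (simp add: replicate_add[symmetric])
  then show ?thesis unfolding insert_min_def by (simp add: interleave_ones_replicate_False)
qed

lemma insert_min_split:
  assumes "bs = True # bs'" "count_list bs False \<le> length w"
  defines "p \<equiv> length w - count_list bs False"
  shows "insert_min w bs = take p (map Suc w) @ 1 # interleave_ones bs' (drop p (map Suc w))"
  using assms by (simp add: insert_min_def interleave_ones_replicate_False)

lemma filter_insert_min:
  "0 \<notin> set w \<Longrightarrow> count_list bs False \<le> length w \<Longrightarrow>
    filter (\<lambda>x. x \<noteq> 1) (insert_min w bs) = map Suc w"
  unfolding insert_min_def by (rule filter_interleave_ones) auto

lemma map_eq_1_insert_min:
  "0 \<notin> set w \<Longrightarrow> count_list bs False \<le> length w \<Longrightarrow>
    map (\<lambda>x. x = 1) (insert_min w bs) = replicate (length w - count_list bs False) False @ bs"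
  unfolding insert_min_def by (rule map_eq_1_interleave_ones) auto

lemma set_insert_min: "set (insert_min w bs) \<subseteq> insert 1 (Suc ` set w)"
  unfolding insert_min_def using set_interleave_ones by fastforce

lemma avoids_both_insert_min:
  assumes k: "2 \<le> k" and w: "0 \<notin> set w"
    and bs: "bs \<noteq> []" "hd bs" "count_list bs False \<le> length w"
  shows "avoids_both k (insert_min w bs) \<longleftrightarrow>
    avoids_both k w \<and> count_list bs False \<le> length (longest_insertable_suffix k w)"
proof -
  let ?W = "map Suc w" and ?p = "length w - count_list bs False"
  obtain bs' where bs': "bs = True # bs'" using bs(1,2) by (cases bs) auto
  define u where "u = take ?p ?W"
  define v where "v = interleave_ones bs' (drop ?p ?W)"
  have split: "insert_min w bs = u @ 1 # v"
    unfolding u_def v_def using insert_min_split[OF bs' bs(3)] .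
  have W: "1 \<notin> set ?W" using w by auto
  then have u: "1 \<notin> set u" unfolding u_def by (meson in_set_takeD)
  have positive: "\<forall>y\<in>set (u @ 1 # v). 1 \<le> y"
    using set_insert_min[of w bs] w unfolding split by fastforce
  have "filter (\<lambda>y. y \<noteq> 1) (u @ v) = filter (\<lambda>y. y \<noteq> 1) (insert_min w bs)"
    unfolding split by simp
  also have "\<dots> = ?W" using w bs(3) by (rule filter_insert_min)
  finally have filter_uv: "filter (\<lambda>y. y \<noteq> 1) (u @ v) = ?W" .
  have filter_v: "filter (\<lambda>y. y \<noteq> 1) v = drop ?p ?W"
    unfolding v_def using W bs' bs(3) by (intro filter_interleave_ones) (auto dest: in_set_dropD)
  have "avoids_both k (insert_min w bs) \<longleftrightarrow> avoids_both k ?W \<and> min_insertable k (drop ?p ?W)"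
    unfolding split avoids_both_split_at_min[OF u positive] filter_uv filter_v ..
  also have "avoids_both k ?W \<longleftrightarrow> avoids_both k w"
    by (rule avoids_both_map) (simp add: strict_mono_onI)
  also have "min_insertable k (drop ?p ?W) \<longleftrightarrow> insertable_start k w \<le> ?p"
    using min_insertable_drop_iff[OF k] insertable_start_map[of w Suc]
    by (simp add: strict_mono_onI)
  also have "\<dots> \<longleftrightarrow> count_list bs False \<le> length (longest_insertable_suffix k w)"
    using insertable_start_le_length[OF k, of w] bs(3)
    by (auto simp: longest_insertable_suffix_def)
  finally show ?thesis .
qed

lemma longest_insertable_suffix_insert_min:
  assumes k: "2 \<le> k" and w: "0 \<notin> set w"
    and bs: "count_list bs False \<le> length (longest_insertable_suffix k w)"
  shows "longest_insertable_suffix k (insert_min w bs) =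
    longest_insertable_suffix k (insert_min (longest_insertable_suffix k w) bs)"
proof -
  define u where "u = take (insertable_start k w) w"
  define s where "s = longest_insertable_suffix k w"
  have w_eq: "w = u @ s" unfolding u_def s_def longest_insertable_suffix_def by simp
  have len_u: "length u = insertable_start k w"
    using insertable_start_le_length[OF k, of w] by (simp add: u_def)
  have s: "0 \<notin> set s" and u: "0 \<notin> set u" using w w_eq by auto
  have bs_s: "count_list bs False \<le> length s" using bs by (simp add: s_def)
  have split: "insert_min w bs = map Suc u @ insert_min s bs"
    unfolding w_eq using bs_s by (rule insert_min_append)
  \<comment> \<open>Deleting the ones of a longer suffix of the new word leaves a raised suffix of w
    longer than s.\<close>
  have "\<not> min_insertable k (drop i (map Suc u @ insert_min s bs))" if i: "i < length u" for i
  proof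
    assume insertable: "min_insertable k (drop i (map Suc u @ insert_min s bs))"
    have "filter (\<lambda>x. x \<noteq> 1) (drop i (map Suc u)) = drop i (map Suc u)"
      using u by (intro filter_True) (auto dest: in_set_dropD)
    then have "filter (\<lambda>x. x \<noteq> 1) (drop i (map Suc u @ insert_min s bs)) = drop i (map Suc w)"
      using i filter_insert_min[OF s bs_s] by (simp add: w_eq)
    then have "subseq (drop i (map Suc w)) (drop i (map Suc u @ insert_min s bs))"
      by (metis subseq_filter_left)
    with insertable have "min_insertable k (drop i (map Suc w))"
      by (rule min_insertable_subseq)
    then have "insertable_start k w \<le> i"
      using min_insertable_drop_iff[OF k] insertable_start_map[of w Suc]
      by (simp add: strict_mono_onI)
    with i len_u show False by simp
  qed
  then show ?thesis unfolding split s_def by (intro longest_insertable_suffix_append[OF k]) simp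
qed

lemma insert_min_map:
  assumes g: "strict_mono_on (set s) g" and s: "0 \<notin> set s" and g_pos: "0 \<notin> g ` set s"
  obtains h where "strict_mono_on (set (insert_min s bs)) h"
    and "insert_min (map g s) bs = map h (insert_min s bs)"
proof
  define h where "h x = (if x \<le> 1 then x else Suc (g (x - 1)))" for x
  have h_Suc: "h (Suc y) = Suc (g y)" if "y \<in> set s" for y
    using that s by (cases y) (auto simp: h_def)
  show "insert_min (map g s) bs = map h (insert_min s bs)"
    unfolding insert_min_def length_map
    by (rule interleave_ones_map) (use h_Suc in \<open>auto simp: h_def\<close>)
  show "strict_mono_on (set (insert_min s bs)) h"
  proof (rule strict_mono_onI)
    fix a c assume ac: "a \<in> set (insert_min s bs)" "c \<in> set (insert_min s bs)" "a < c"
    have pos: "0 < g y" if "y \<in> set s" for y using g_pos that by fastforce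
    from ac(1,2) set_insert_min have "a \<in> insert 1 (Suc ` set s)" "c \<in> insert 1 (Suc ` set s)"
      by blast+
    then show "h a < h c"
    proof (elim insertE imageE)
      fix y assume "a = 1" "y \<in> set s" "c = Suc y"
      then show ?thesis using pos h_Suc by (simp add: h_def)
    next
      fix y y' assume "a = Suc y" "y \<in> set s" "c = Suc y'" "y' \<in> set s"
      then show ?thesis using ac(3) h_Suc strict_mono_on_less[OF g] by simp
    qed (use ac(3) s in auto)
  qed
qed

lemma is_word_on_letters: "is_word_on n r w \<Longrightarrow> set w \<subseteq> {1..n}"
  unfolding is_word_on_def by blast

lemma is_word_on_nonzero: "is_word_on n r w \<Longrightarrow> 0 \<notin> set w"
  using is_word_on_letters by fastforce

lemma is_word_on_count_le: "is_word_on n r w \<Longrightarrow> count_list w x \<le> r"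
  unfolding is_word_on_def by (metis count_notin le0 order.refl subsetD)

lemma is_word_on_length: "is_word_on n r w \<Longrightarrow> length w = n * r"
proof -
  assume w: "is_word_on n r w"
  then have "length w = (\<Sum>x\<in>{1..n}. count_list w x)"
    using sum_count_set[of w "{1..n}"] is_word_on_letters by simp
  also have "\<dots> = n * r" using w unfolding is_word_on_def by simp
  finally show ?thesis .
qed

lemma is_word_on_insert_min:
  assumes w: "is_word_on n r w" and bs: "count_list bs True = r" "count_list bs False \<le> length w"
  shows "is_word_on (Suc n) r (insert_min w bs)"
  unfolding is_word_on_def
proof
  let ?m = "replicate (length w - count_list bs False) False @ bs"
  have m: "count_list ?m False = length (map Suc w)" "count_list ?m True = r" using bs by simp_all
  show "set (insert_min w bs) \<subseteq> {1..Suc n}"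
  proof
    fix x assume "x \<in> set (insert_min w bs)"
    then have "x \<in> insert 1 (Suc ` set w)" using set_insert_min by blast
    then show "x \<in> {1..Suc n}" using is_word_on_letters[OF w] by auto
  qed
  show "\<forall>a\<in>{1..Suc n}. count_list (insert_min w bs) a = r"
  proof
    fix a assume a: "a \<in> {1..Suc n}"
    have "count_list (map Suc w) a = (if a = 1 then 0 else r)"
    proof (cases a)
      case (Suc y)
      have "count_list (map Suc w) (Suc y) = count_list w y"
        by (rule count_list_map_conv) (simp add: inj_def)
      then show ?thesis using Suc a w is_word_on_letters[OF w] unfolding is_word_on_def
        by (cases y) (auto simp: count_list_0_iff)
    qed (use a in simp)
    then show "count_list (insert_min w bs) a = r"
      unfolding insert_min_def count_list_interleave_ones[OF m(1)] m(2) by simp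
  qed
qed

lemma insert_min_inj:
  assumes "0 \<notin> set w1" "count_list bs1 False \<le> length w1" "bs1 \<noteq> []" "hd bs1"
    and "0 \<notin> set w2" "count_list bs2 False \<le> length w2" "bs2 \<noteq> []" "hd bs2"
    and eq: "insert_min w1 bs1 = insert_min w2 bs2"
  shows "w1 = w2 \<and> bs1 = bs2"
proof
  have "map Suc w1 = map Suc w2"
    using filter_insert_min[OF assms(1,2)] filter_insert_min[OF assms(5,6)] eq by simp
  then show "w1 = w2" by (simp add: inj_map_eq_map)
  have drop_prefix: "dropWhile Not (replicate p False @ bs) = bs" if "bs \<noteq> []" "hd bs" for p bs
    using that by (induction p) (cases bs; simp)+
  have "replicate (length w1 - count_list bs1 False) False @ bs1 =
      replicate (length w2 - count_list bs2 False) False @ bs2"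
    using map_eq_1_insert_min[OF assms(1,2)] map_eq_1_insert_min[OF assms(5,6)] eq by simp
  then show "bs1 = bs2" using drop_prefix assms(3,4,7,8) by metis
qed

lemma split_first_True:
  assumes "True \<in> set m"
  obtains p bs where "m = replicate p False @ bs" "bs \<noteq> []" "hd bs"
proof
  have "takeWhile Not m = replicate (length (takeWhile Not m)) False"
    by (rule replicate_length_same[symmetric]) (auto dest: set_takeWhileD)
  then show "m = replicate (length (takeWhile Not m)) False @ dropWhile Not m"
    by (metis takeWhile_dropWhile_id)
  show "dropWhile Not m \<noteq> []" using assms by (metis (full_types) dropWhile_eq_Nil_conv)
  then show "hd (dropWhile Not m)" using hd_dropWhile[of Not m] by simp
qed

lemma map_Suc_remove_ones:
  assumes "is_word_on n r w"
  shows "map Suc (map (\<lambda>x. x - 1) (filter (\<lambda>x. x \<noteq> 1) w)) = filter (\<lambda>x. x \<noteq> 1) w"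
  using is_word_on_letters[OF assms] unfolding map_map by (intro map_idI) auto

lemma is_word_on_remove_ones:
  assumes w: "is_word_on (Suc n) r w"
  shows "is_word_on n r (map (\<lambda>x. x - 1) (filter (\<lambda>x. x \<noteq> 1) w))" (is "is_word_on n r ?w'")
  unfolding is_word_on_def
proof
  show "set ?w' \<subseteq> {1..n}" using is_word_on_letters[OF w] by fastforce
  show "\<forall>y\<in>{1..n}. count_list ?w' y = r"
  proof
    fix y assume y: "y \<in> {1..n}"
    have "count_list ?w' y = count_list (map Suc ?w') (Suc y)"
      by (rule count_list_map_conv[symmetric]) (simp add: inj_def)
    also have "\<dots> = count_list w (Suc y)"
      unfolding map_Suc_remove_ones[OF w] count_list_filter using y by simp
    also have "\<dots> = r" using w y unfolding is_word_on_def by simp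
    finally show "count_list ?w' y = r" .
  qed
qed

lemma word_eq_insert_min:
  assumes w: "is_word_on (Suc n) r w" and r: "0 < r"
  obtains w' bs where "is_word_on n r w'" "bs \<noteq> []" "hd bs" "count_list bs True = r"
    "count_list bs False \<le> length w'" "w = insert_min w' bs"
proof -
  define w' where "w' = map (\<lambda>x. x - 1) (filter (\<lambda>x. x \<noteq> 1) w)"
  define m where "m = map (\<lambda>x. x = 1) w"
  have "count_list m True = count_list w 1" unfolding m_def by (induction w) auto
  then have count_True: "count_list m True = r" using w unfolding is_word_on_def by simp
  then have "True \<in> set m" using r count_list_0_iff[of m True] by auto
  then obtain p bs where m: "m = replicate p False @ bs" "bs \<noteq> []" "hd bs"
    by (rule split_first_True)
  have "count_list m False = length w'" unfolding m_def w'_def by (induction w) auto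
  then have p: "p = length w' - count_list bs False" using m(1) by simp
  have "insert_min w' bs = interleave_ones m (filter (\<lambda>x. x \<noteq> 1) w)"
    unfolding insert_min_def w'_def map_Suc_remove_ones[OF w] m(1) p[unfolded w'_def] ..
  then have "w = insert_min w' bs" using interleave_ones_mask_filter[of w] by (simp add: m_def)
  moreover have "is_word_on n r w'" unfolding w'_def using w by (rule is_word_on_remove_ones)
  moreover have "count_list bs True = r" "count_list bs False \<le> length w'"
    using count_True \<open>count_list m False = length w'\<close> m(1) by simp_all
  ultimately show ?thesis using that m(2,3) by blast
qed

section \<open>The transfer matrix\<close>

locale avoider_transfer =
  fixes k r :: nat
  assumes two_le_k: "2 \<le> k" and r_pos: "0 < r"
begin

definition avoiders :: "nat \<Rightarrow> nat list set" where
  "avoiders n = {w. is_word_on n r w \<and> avoids_both k w}"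

definition state :: "nat list \<Rightarrow> nat list" where
  "state w = standardize (longest_insertable_suffix k w)"

definition states :: "nat list set" where
  "states = {s. length s \<le> (k - 2) * r \<and> set s \<subseteq> {1..k - 2}}"

definition masks :: "nat \<Rightarrow> bool list set" where
  "masks m = {bs. bs \<noteq> [] \<and> hd bs \<and> count_list bs True = r \<and> count_list bs False \<le> m}"

definition state_count :: "nat \<Rightarrow> nat list \<Rightarrow> nat" where
  "state_count n s = card {w \<in> avoiders n. state w = s}"

definition transitions :: "nat list \<Rightarrow> nat list \<Rightarrow> nat" where
  "transitions t s = card {bs \<in> masks (length s). state (insert_min s bs) = t}"

lemma finite_avoiders: "finite (avoiders n)"
proof (rule finite_subset)
  show "avoiders n \<subseteq> {w. set w \<subseteq> {1..n} \<and> length w = n * r}"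
    unfolding avoiders_def using is_word_on_letters is_word_on_length by auto
qed (simp add: finite_lists_length_eq)

lemma finite_states: "finite states"
proof (rule finite_subset)
  show "states \<subseteq> {s. set s \<subseteq> {1..k - 2} \<and> length s \<le> (k - 2) * r}"
    unfolding states_def by auto
qed (simp add: finite_lists_length_le)

lemma finite_masks: "finite (masks m)"
proof (rule finite_subset)
  have "length bs = count_list bs True + count_list bs False" for bs
    by (induction bs) auto
  then show "masks m \<subseteq> {bs. set bs \<subseteq> UNIV \<and> length bs \<le> r + m}"
    unfolding masks_def by fastforce
qed (rule finite_lists_length_le, simp)

lemma length_state: "length (state w) = length (longest_insertable_suffix k w)"
  by (simp add: state_def)

lemma state_in_states:
  assumes w: "is_word_on n r w"
  shows "state w \<in> states"
proof -
  let ?s = "longest_insertable_suffix k w"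
  have card: "card (set ?s) \<le> k - 2"
    using min_insertable_longest_insertable_suffix[OF two_le_k]
    by (rule card_set_le_if_min_insertable)
  have "count_list ?s x \<le> count_list w x" for x
    unfolding longest_insertable_suffix_def by (metis append_take_drop_id count_list_append le_add2)
  then have "count_list ?s x \<le> r" for x using is_word_on_count_le[OF w] order_trans by blast
  then have "length ?s \<le> card (set ?s) * r"
    using sum_count_set[of ?s "set ?s"] sum_bounded_above[of "set ?s" "count_list ?s" r] by simp
  also have "\<dots> \<le> (k - 2) * r" using card by simp
  finally have "length (state w) \<le> (k - 2) * r" by (simp add: length_state)
  moreover have "set (state w) \<subseteq> {1..k - 2}"
    using set_standardize[of ?s] card unfolding state_def by auto
  ultimately show ?thesis unfolding states_def by simp
qed

lemma state_image_avoiders: "state ` avoiders n \<subseteq> states"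
  unfolding avoiders_def using state_in_states by blast

lemma state_map:
  assumes "strict_mono_on (set w) h"
  shows "state (map h w) = state w"
proof -
  have "strict_mono_on (set (longest_insertable_suffix k w)) h"
    using assms set_drop_subset unfolding longest_insertable_suffix_def by (rule monotone_on_subset)
  then show ?thesis unfolding state_def longest_insertable_suffix_map[OF assms]
    by (rule standardize_map)
qed

lemma state_insert_min:
  assumes w: "0 \<notin> set w" and bs: "count_list bs False \<le> length (state w)"
  shows "state (insert_min w bs) = state (insert_min (state w) bs)"
proof -
  let ?s = "longest_insertable_suffix k w"
  obtain g where g: "strict_mono_on (set (state w)) g" "map g (state w) = ?s"
    unfolding state_def by (rule standardize_inverse)
  have s: "0 \<notin> set ?s" using w unfolding longest_insertable_suffix_def by (meson in_set_dropD)
  have "0 \<notin> set (state w)" using set_standardize[of ?s] unfolding state_def by auto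
  moreover have "0 \<notin> g ` set (state w)" using s unfolding g(2)[symmetric] by simp
  ultimately obtain h where h: "strict_mono_on (set (insert_min (state w) bs)) h"
    "insert_min (map g (state w)) bs = map h (insert_min (state w) bs)"
    by (rule insert_min_map[OF g(1)])
  have relabel: "insert_min ?s bs = map h (insert_min (state w) bs)" using h(2) g(2) by simp
  have "longest_insertable_suffix k (insert_min w bs) =
      longest_insertable_suffix k (insert_min ?s bs)"
    by (rule longest_insertable_suffix_insert_min[OF two_le_k w])
      (use bs in \<open>simp add: length_state\<close>)
  then have "state (insert_min w bs) = state (insert_min ?s bs)" by (simp only: state_def)
  also have "\<dots> = state (insert_min (state w) bs)"
    unfolding relabel using h(1) by (rule state_map)
  finally show ?thesis .
qed

lemma avoiders_Suc:
  "avoiders (Suc n) = (\<lambda>(w, bs). insert_min w bs) ` (SIGMA w:avoiders n. masks (length (state w)))"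
proof (intro equalityI subsetI)
  fix w assume "w \<in> avoiders (Suc n)"
  then have w: "is_word_on (Suc n) r w" "avoids_both k w" unfolding avoiders_def by auto
  obtain w' bs where w': "is_word_on n r w'" and bs: "bs \<noteq> []" "hd bs" "count_list bs True = r"
    "count_list bs False \<le> length w'" and eq: "w = insert_min w' bs"
    using word_eq_insert_min[OF w(1) r_pos] .
  have "0 \<notin> set w'" using is_word_on_nonzero[OF w'] .
  then have "avoids_both k w' \<and> count_list bs False \<le> length (state w')"
    using avoids_both_insert_min[OF two_le_k _ bs(1,2,4)] w(2) eq by (simp add: length_state)
  with w' bs eq
  show "w \<in> (\<lambda>(w, bs). insert_min w bs) ` (SIGMA w:avoiders n. masks (length (state w)))"
    unfolding avoiders_def masks_def by force
next
  fix x assume "x \<in> (\<lambda>(w, bs). insert_min w bs) ` (SIGMA w:avoiders n. masks (length (state w)))"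
  then obtain w bs where w: "is_word_on n r w" "avoids_both k w" and bs: "bs \<noteq> []" "hd bs"
    "count_list bs True = r" "count_list bs False \<le> length (state w)" and x: "x = insert_min w bs"
    unfolding avoiders_def masks_def by auto
  have w0: "0 \<notin> set w" using is_word_on_nonzero[OF w(1)] .
  have bs_w: "count_list bs False \<le> length w"
    using bs(4) length_state[of w] by (simp add: longest_insertable_suffix_def)
  have "avoids_both k x"
    using avoids_both_insert_min[OF two_le_k w0 bs(1,2) bs_w] w(2) bs(4) x
    by (simp add: length_state)
  moreover have "is_word_on (Suc n) r x" using is_word_on_insert_min[OF w(1) bs(3) bs_w] x by simp
  ultimately show "x \<in> avoiders (Suc n)" unfolding avoiders_def by simp
qed

lemma inj_on_insert_min:
  "inj_on (\<lambda>(w, bs). insert_min w bs) (SIGMA w:avoiders n. masks (length (state w)))"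
proof (rule inj_onI, clarsimp)
  fix w1 bs1 w2 bs2
  assume "w1 \<in> avoiders n" "bs1 \<in> masks (length (state w1))"
    "w2 \<in> avoiders n" "bs2 \<in> masks (length (state w2))" "insert_min w1 bs1 = insert_min w2 bs2"
  moreover have "0 \<notin> set w" "length (state w) \<le> length w" if "w \<in> avoiders n" for w
    using that is_word_on_nonzero
    by (auto simp: avoiders_def length_state longest_insertable_suffix_def)
  ultimately show "w1 = w2 \<and> bs1 = bs2"
    unfolding masks_def by (intro insert_min_inj) (auto intro: order_trans)
qed

lemma state_count_Suc: "state_count (Suc n) t = (\<Sum>s\<in>states. transitions t s * state_count n s)"
proof -
  let ?D = "SIGMA w:avoiders n. masks (length (state w))"
  let ?E = "{(w, bs) \<in> ?D. state (insert_min (state w) bs) = t}"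
  have state_eq: "state (insert_min w bs) = state (insert_min (state w) bs)"
    if "(w, bs) \<in> ?D" for w bs
    using that is_word_on_nonzero by (intro state_insert_min) (auto simp: avoiders_def masks_def)
  have "{w \<in> avoiders (Suc n). state w = t} = (\<lambda>(w, bs). insert_min w bs) ` ?E"
    unfolding avoiders_Suc using state_eq by fastforce
  then have "state_count (Suc n) t = card ?E"
    unfolding state_count_def by (auto intro!: card_image inj_on_subset[OF inj_on_insert_min])
  also have "?E = (SIGMA w:avoiders n.
      {bs \<in> masks (length (state w)). state (insert_min (state w) bs) = t})"
    by auto
  also have "card \<dots> = (\<Sum>w\<in>avoiders n. transitions t (state w))"
    unfolding transitions_def by (rule card_SigmaI) (simp_all add: finite_avoiders finite_masks)
  also have "\<dots> = (\<Sum>s\<in>states. \<Sum>w\<in>{w \<in> avoiders n. state w = s}. transitions t (state w))"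
    by (rule sum.group[symmetric])
      (simp_all add: finite_avoiders finite_states state_image_avoiders)
  also have "\<dots> = (\<Sum>s\<in>states. transitions t s * state_count n s)"
    unfolding state_count_def by (simp add: mult.commute)
  finally show ?thesis .
qed

lemma card_avoiders: "card (avoiders n) = (\<Sum>s\<in>states. state_count n s)"
proof -
  have "card (avoiders n) = (\<Sum>w\<in>avoiders n. 1)" by simp
  also have "\<dots> = (\<Sum>s\<in>states. \<Sum>w\<in>{w \<in> avoiders n. state w = s}. 1)"
    by (rule sum.group[symmetric])
      (simp_all add: finite_avoiders finite_states state_image_avoiders)
  also have "\<dots> = (\<Sum>s\<in>states. state_count n s)" unfolding state_count_def by simp
  finally show ?thesis .
qed

lemma count_avoiders_eq_card: "count_avoiders k r n = card (avoiders n)"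
  unfolding count_avoiders_def avoiders_def avoids_both_def by (simp add: conj_assoc)

end

section \<open>Linear recurrences\<close>

lemma exists_nontrivial_dependence:
  fixes x :: "nat \<Rightarrow> nat \<Rightarrow> 'a::field"
  obtains v where "\<exists>l<Suc m. v l \<noteq> 0" and "\<And>i. i < m \<Longrightarrow> (\<Sum>l<Suc m. x l i * v l) = 0"
proof -
  define A :: "'a mat" where
    "A = mat\<^sub>r (Suc m) (Suc m) (\<lambda>i. if i = m then 0\<^sub>v (Suc m) else vec (Suc m) (\<lambda>l. x l i))"
  have A: "A \<in> carrier_mat (Suc m) (Suc m)" unfolding A_def by simp
  have "det A = 0" unfolding A_def by (rule det_row_0) auto
  then obtain v where v: "v \<in> carrier_vec (Suc m)" "v \<noteq> 0\<^sub>v (Suc m)" "A *\<^sub>v v = 0\<^sub>v (Suc m)"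
    using det_0_iff_vec_prod_zero_field[OF A] by blast
  have dim_v: "dim_vec v = Suc m" using v(1) by simp
  show ?thesis
  proof (rule that[of "\<lambda>l. v $ l"])
    show "\<exists>l<Suc m. v $ l \<noteq> 0"
      using v(2) dim_v by (metis eq_vecI index_zero_vec(1,2))
    show "(\<Sum>l<Suc m. x l i * v $ l) = 0" if i: "i < m" for i
    proof -
      have "row A i = vec (Suc m) (\<lambda>l. x l i)"
        unfolding A_def using i by (subst row_mat_of_row_fun) auto
      moreover have "(A *\<^sub>v v) $ i = row A i \<bullet> v" using i A by simp
      ultimately show ?thesis using v(3) i unfolding scalar_prod_def dim_v
        by (simp add: atLeast0LessThan)
    qed
  qed
qed

lemma exists_term_in_span_of_earlier:
  fixes x :: "nat \<Rightarrow> nat \<Rightarrow> 'a::field"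
  shows "\<exists>d a. \<forall>i<m. x d i = (\<Sum>l<d. a l * x l i)"
proof -
  obtain v where nonzero: "\<exists>l<Suc m. v l \<noteq> 0"
    and kernel: "\<And>i. i < m \<Longrightarrow> (\<Sum>l<Suc m. x l i * v l) = 0"
    by (rule exists_nontrivial_dependence[where x = x and m = m]) blast
  define d where "d = Max {l. l < Suc m \<and> v l \<noteq> 0}"
  have fin: "finite {l. l < Suc m \<and> v l \<noteq> 0}" by simp
  have vd: "v d \<noteq> 0" "d < Suc m"
    using Max_in[OF fin] nonzero unfolding d_def by auto
  have above_d: "v l = 0" if "d < l" "l < Suc m" for l
    using Max_ge[OF fin, of l] that unfolding d_def by fastforce
  define a where "a l = - v l / v d" for l
  have "x d i = (\<Sum>l<d. a l * x l i)" if i: "i < m" for i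
  proof -
    have "(\<Sum>l<Suc m. x l i * v l) = (\<Sum>l<Suc d. x l i * v l)"
      using vd(2) above_d by (intro sum.mono_neutral_right) auto
    then have "x d i * v d = - (\<Sum>l<d. x l i * v l)"
      using kernel[OF i] by (simp add: add_eq_0_iff2 add.commute)
    then have "x d i = - (\<Sum>l<d. x l i * v l) / v d" using vd(1) by (simp add: field_simps)
    also have "\<dots> = (\<Sum>l<d. a l * x l i)"
      unfolding a_def by (simp add: sum_divide_distrib sum_negf[symmetric] field_simps)
    finally show ?thesis .
  qed
  then show ?thesis by blast
qed

lemma linear_recurrence_of_transfer:
  fixes x :: "nat \<Rightarrow> 'b \<Rightarrow> 'a::field"
  assumes S: "finite S" and step: "\<And>n t. t \<in> S \<Longrightarrow> x (Suc n) t = (\<Sum>s\<in>S. M t s * x n s)"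
  shows "\<exists>d a. \<forall>n. \<forall>t\<in>S. x (n + d) t = (\<Sum>l<d. a l * x (n + l) t)"
proof -
  obtain e where e: "bij_betw e {..<card S} S" using ex_bij_betw_nat_finite[OF S]
    by (auto simp: atLeast0LessThan)
  obtain d a where da: "\<forall>i<card S. x d (e i) = (\<Sum>l<d. a l * x l (e i))"
    using exists_term_in_span_of_earlier[where x = "\<lambda>l i. x l (e i)" and m = "card S"] by blast
  have base: "\<forall>t\<in>S. x d t = (\<Sum>l<d. a l * x l t)"
  proof
    fix t assume "t \<in> S"
    then obtain i where "i < card S" "t = e i" using e by (auto simp: bij_betw_def)
    with da show "x d t = (\<Sum>l<d. a l * x l t)" by simp
  qed
  have "\<forall>t\<in>S. x (n + d) t = (\<Sum>l<d. a l * x (n + l) t)" for n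
  proof (induction n)
    case 0
    then show ?case using base by simp
  next
    case (Suc n)
    show ?case
    proof
      fix t assume t: "t \<in> S"
      have "x (Suc n + d) t = (\<Sum>s\<in>S. M t s * (\<Sum>l<d. a l * x (n + l) s))"
        using step[OF t] Suc.IH by simp
      also have "\<dots> = (\<Sum>l<d. a l * (\<Sum>s\<in>S. M t s * x (n + l) s))"
        by (simp add: sum_distrib_left mult.left_commute sum.swap[of _ S])
      also have "\<dots> = (\<Sum>l<d. a l * x (Suc n + l) t)" using step[OF t] by simp
      finally show "x (Suc n + d) t = (\<Sum>l<d. a l * x (Suc n + l) t)" .
    qed
  qed
  then show ?thesis by blast
qed

lemma linear_recurrence_of_transfer_sum:
  fixes x :: "nat \<Rightarrow> 'b \<Rightarrow> 'a::field"
  assumes "finite S" and "\<And>n t. t \<in> S \<Longrightarrow> x (Suc n) t = (\<Sum>s\<in>S. M t s * x n s)"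
  shows "\<exists>d a. \<forall>n. (\<Sum>t\<in>S. x (n + d) t) = (\<Sum>l<d. a l * (\<Sum>t\<in>S. x (n + l) t))"
proof -
  obtain d a where "\<forall>n. \<forall>t\<in>S. x (n + d) t = (\<Sum>l<d. a l * x (n + l) t)"
    using linear_recurrence_of_transfer[where x = x and M = M, OF assms] by blast
  then have "(\<Sum>t\<in>S. x (n + d) t) = (\<Sum>l<d. a l * (\<Sum>t\<in>S. x (n + l) t))" for n
    by (simp add: sum_distrib_left sum.swap[of _ S])
  then show ?thesis by blast
qed

theorem mainTheorem3:
  fixes k r :: nat
  assumes "k \<ge> 3" and "r \<ge> 1"
  shows "\<exists>(d::nat) (N::nat) (a :: nat \<Rightarrow> rat).
           \<forall>n\<ge>N. of_nat (count_avoiders k r (n + d)) =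
                    (\<Sum>i<d. a i * of_nat (count_avoiders k r (n + i)))"
proof -
  interpret avoider_transfer k r using assms by unfold_locales simp_all
  define x where "x n s = (of_nat (state_count n s) :: rat)" for n s
  have step: "x (Suc n) t = (\<Sum>s\<in>states. of_nat (transitions t s) * x n s)" for n t
    unfolding x_def state_count_Suc by simp
  obtain d a
    where rec: "\<forall>n. (\<Sum>t\<in>states. x (n + d) t) = (\<Sum>l<d. a l * (\<Sum>t\<in>states. x (n + l) t))"
    using linear_recurrence_of_transfer_sum[where x = x and M = "\<lambda>t s. of_nat (transitions t s)",
        OF finite_states step]
    by blast
  have "of_nat (count_avoiders k r n) = (\<Sum>t\<in>states. x n t)" for n
    unfolding count_avoiders_eq_card card_avoiders x_def by simp
  with rec show ?thesis by (intro exI[of _ d] exI[of _ 0] exI[of _ a]) simp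
qed

end
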